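(* For every positive integer $n$, \[ {}_{H}w_{n}(x)=\sum_{l=0}^{n}\sum_{k=1}^{n}\sum_{j=0}^{k}\frac{(-1)^{k+1}}{k}\binom{n}{l}\genfrac{\{}{\}}{0pt}{}{n-l}{k}\genfrac{[}{]}{0pt}{}{k+1}{j+1}\,w_{l+j}(x)\left(\frac{x}{1+x}\right)^{k}. \]
   Context: $\genfrac{\{}{\}}{0pt}{}{n}{k}$ denotes the Stirling numbers of the second kind and $\genfrac{[}{]}{0pt}{}{n}{k}$ the unsigned Stirling numbers of the first kind. The geometric polynomials are $w_n(x)=\sum_{k=0}^{n}\genfrac{\{}{\}}{0pt}{}{n}{k}k!\,x^k$ (so $w_0(x)=1$). With $H_k=\sum_{i=1}^k 1/i$ the harmonic numbers, the harmonic geometric polynomials are ${}_{H}w_n(x)=\sum_{k=1}^{n}\genfrac{\{}{\}}{0pt}{}{n}{k}k!\,H_k\,x^k$ (so ${}_Hw_0(x)=0$). *)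

theory Defs
  imports "HOL-Analysis.Analysis" "HOL-Combinatorics.Stirling"
begin

definition geom_poly :: "nat \<Rightarrow> real \<Rightarrow> real" where
  "geom_poly n x = (\<Sum>k=0..n. real (Stirling n k) * fact k * x ^ k)"

definition harm_geom_poly :: "nat \<Rightarrow> real \<Rightarrow> real" where
  "harm_geom_poly n x = (\<Sum>k=1..n. real (Stirling n k) * fact k * harm k * x ^ k)"

end

theory Submission
  imports Defs
begin

(* Write H_m = sum_{k=1..m} (-1)^(k+1) C(m,k) / k in the left-hand side.  On the right-hand side
   the Stirling numbers of the first kind collapse the sum over j:
   sum_j [k+1, j+1] w_(l+j)(x) = (1+x)^k sum_i {l, i} (i+k)! x^i, which cancels (1+x)^(-k).
   The remaining sum over l is the binomial convolution
   sum_l C(n,l) {n-l, k} {l, i} = C(i+k, k) {n, i+k}, after which both sides agree term by term. *)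

lemma alternating_binomial_sum_from_1:
  assumes "n > 0"
  shows "(\<Sum>k=1..n. (-1) ^ (k + 1) * of_nat (n choose k)) = (1 :: 'a :: comm_ring_1)"
proof -
  have "(\<Sum>k\<le>n. (-1) ^ k * of_nat (n choose k)) = (0 :: 'a)"
    using assms by (rule choose_alternating_sum)
  then have "1 + (\<Sum>k=1..n. (-1) ^ k * of_nat (n choose k)) = (0 :: 'a)"
    by (simp add: atMost_atLeast0 sum.atLeast_Suc_atMost)
  then have "(\<Sum>k=1..n. (-1) ^ k * of_nat (n choose k)) = (-1 :: 'a)"
    by (metis add.commute eq_neg_iff_add_eq_0)
  then show ?thesis
    by (simp add: sum_negf)
qed

lemma harm_eq_alternating_binomial_sum:
  "harm n =
    (\<Sum>k=1..n. (-1) ^ (k + 1) / of_nat k * of_nat (n choose k) :: 'a :: real_normed_field)"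
proof (induction n)
  case 0
  show ?case by (simp add: harm_def)
next
  case (Suc n)
  have absorb: "(-1) ^ (k + 1) / of_nat k * of_nat (n choose (k - 1))
      = (-1) ^ (k + 1) * of_nat (Suc n choose k) / (of_nat (Suc n) :: 'a)"
    if "k \<in> {1..Suc n}" for k
  proof -
    have "k * (Suc n choose k) = Suc n * (n choose (k - 1))"
      using that times_binomial_minus1_eq[of k "Suc n"] by simp
    then have "of_nat k * of_nat (Suc n choose k) = (of_nat (Suc n) * of_nat (n choose (k - 1)) :: 'a)"
      by (metis of_nat_mult)
    moreover have "of_nat k \<noteq> (0 :: 'a)"
      using that by auto
    ultimately show ?thesis by (simp add: field_simps del: of_nat_Suc)
  qed
  have "(\<Sum>k=1..Suc n. (-1) ^ (k + 1) / of_nat k * of_nat (Suc n choose k) :: 'a)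
      = (\<Sum>k=1..Suc n. (-1) ^ (k + 1) / of_nat k * of_nat (n choose k))
        + (\<Sum>k=1..Suc n. (-1) ^ (k + 1) / of_nat k * of_nat (n choose (k - 1)))"
    by (auto simp: sum.distrib[symmetric] algebra_simps choose_reduce_nat[of "Suc n"] intro!: sum.cong)
  also have "(\<Sum>k=1..Suc n. (-1) ^ (k + 1) / of_nat k * of_nat (n choose k)) = (harm n :: 'a)"
    by (simp add: Suc.IH)
  also have "(\<Sum>k=1..Suc n. (-1) ^ (k + 1) / of_nat k * of_nat (n choose (k - 1)))
      = (\<Sum>k=1..Suc n. (-1) ^ (k + 1) * of_nat (Suc n choose k)) / (of_nat (Suc n) :: 'a)"
    unfolding sum_divide_distrib by (rule sum.cong) (simp_all only: absorb)
  also have "\<dots> = inverse (of_nat (Suc n))"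
    by (simp only: alternating_binomial_sum_from_1 zero_less_Suc divide_inverse mult_1_left)
  finally show ?case
    by (simp add: harm_Suc)
qed

lemma harm_eq_alternating_binomial_sum_upto:
  assumes "m \<le> n"
  shows "harm m =
    (\<Sum>k=1..n. (-1) ^ (k + 1) / of_nat k * of_nat (m choose k) :: 'a :: real_normed_field)"
  unfolding harm_eq_alternating_binomial_sum using assms by (intro sum.mono_neutral_left) auto

lemma binomial_convolution_Suc:
  fixes a b :: "nat \<Rightarrow> 'a :: comm_semiring_1"
  shows "(\<Sum>l\<le>Suc n. of_nat (Suc n choose l) * a (Suc n - l) * b l)
    = (\<Sum>l\<le>n. of_nat (n choose l) * a (Suc n - l) * b l)
      + (\<Sum>l\<le>n. of_nat (n choose l) * a (n - l) * b (Suc l))"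
proof -
  have "(\<Sum>l\<le>Suc n. of_nat (Suc n choose l) * a (Suc n - l) * b l)
      = a (Suc n) * b 0 + (\<Sum>l\<le>n. of_nat (n choose Suc l) * a (n - l) * b (Suc l))
        + (\<Sum>l\<le>n. of_nat (n choose l) * a (n - l) * b (Suc l))"
    by (simp only: sum.atMost_Suc_shift) (simp add: sum.distrib algebra_simps)
  moreover have "(\<Sum>l\<le>n. of_nat (n choose l) * a (Suc n - l) * b l)
      = a (Suc n) * b 0 + (\<Sum>l\<le>n. of_nat (n choose Suc l) * a (n - l) * b (Suc l))"
  proof -
    have "(\<Sum>l\<le>n. of_nat (n choose l) * a (Suc n - l) * b l)
        = (\<Sum>l\<le>Suc n. of_nat (n choose l) * a (Suc n - l) * b l)"
      by (simp add: binomial_eq_0)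
    then show ?thesis
      by (simp only: sum.atMost_Suc_shift) simp
  qed
  ultimately show ?thesis
    by (simp add: algebra_simps)
qed

lemma Stirling_0_right [simp]: "Stirling n 0 = (if n = 0 then 1 else 0)"
  by (cases n) auto

lemma Stirling_binomial_convolution:
  "(\<Sum>l\<le>n. (n choose l) * Stirling (n - l) k * Stirling l i)
    = (i + k choose k) * Stirling n (i + k)"
proof (induction n arbitrary: k i)
  case 0
  show ?case by (cases k; cases i) auto
next
  case (Suc n)
  consider "k = 0" | "i = 0" | k' i' where "k = Suc k'" "i = Suc i'"
    by (meson not0_implies_Suc)
  then show ?case
  proof cases
    case 1
    then have "(\<Sum>l\<le>Suc n. (Suc n choose l) * Stirling (Suc n - l) k * Stirling l i)
        = (\<Sum>l\<le>Suc n. if l = Suc n then Stirling (Suc n) i else 0)"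
      by (intro sum.cong) auto
    with 1 show ?thesis by simp
  next
    case 2
    then have "(\<Sum>l\<le>Suc n. (Suc n choose l) * Stirling (Suc n - l) k * Stirling l i)
        = (\<Sum>l\<le>Suc n. if l = 0 then Stirling (Suc n) k else 0)"
      by (intro sum.cong) auto
    with 2 show ?thesis by simp
  next
    case 3
    let ?T = "\<lambda>k i. \<Sum>l\<le>n. (n choose l) * Stirling (n - l) k * Stirling l i"
    have "(\<Sum>l\<le>Suc n. (Suc n choose l) * Stirling (Suc n - l) k * Stirling l i)
        = (\<Sum>l\<le>n. (n choose l) * Stirling (Suc n - l) k * Stirling l i)
          + (\<Sum>l\<le>n. (n choose l) * Stirling (n - l) k * Stirling (Suc l) i)"
      using binomial_convolution_Suc[where 'a = nat] by simp
    also have "(\<Sum>l\<le>n. (n choose l) * Stirling (Suc n - l) k * Stirling l i)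
        = k * ?T k i + ?T k' i"
      unfolding 3 sum_distrib_left sum.distrib[symmetric]
      by (rule sum.cong) (auto simp: Suc_diff_le algebra_simps)
    also have "(\<Sum>l\<le>n. (n choose l) * Stirling (n - l) k * Stirling (Suc l) i)
        = i * ?T k i + ?T k i'"
      unfolding 3 sum_distrib_left sum.distrib[symmetric]
      by (rule sum.cong) (auto simp: algebra_simps)
    finally show ?thesis
      unfolding Suc.IH 3 by (simp add: algebra_simps)
  qed
qed

lemma sum_Stirling_Suc:
  fixes f :: "nat \<Rightarrow> 'a :: comm_semiring_1"
  shows "(\<Sum>i\<le>Suc l. of_nat (Stirling (Suc l) i) * f i)
    = (\<Sum>i\<le>l. of_nat (Stirling l i) * (of_nat i * f i + f (Suc i)))"
proof -
  have "(\<Sum>i\<le>Suc l. of_nat (Stirling (Suc l) i) * f i)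
      = (\<Sum>i\<le>l. of_nat (Suc i) * of_nat (Stirling l (Suc i)) * f (Suc i))
        + (\<Sum>i\<le>l. of_nat (Stirling l i) * f (Suc i))"
    by (simp only: sum.atMost_Suc_shift) (simp add: sum.distrib algebra_simps)
  also have "(\<Sum>i\<le>l. of_nat (Suc i) * of_nat (Stirling l (Suc i)) * f (Suc i))
      = (\<Sum>i\<le>Suc l. of_nat i * of_nat (Stirling l i) * f i)"
    by (simp only: sum.atMost_Suc_shift) simp
  also have "\<dots> = (\<Sum>i\<le>l. of_nat i * of_nat (Stirling l i) * f i)"
    by simp
  finally show ?thesis
    by (simp add: sum.distrib algebra_simps)
qed

(* The k-th derivative of x^k w_l(x). *)
definition geom_poly_shift :: "nat \<Rightarrow> nat \<Rightarrow> real \<Rightarrow> real" where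
  "geom_poly_shift l k x = (\<Sum>i\<le>l. real (Stirling l i) * fact (i + k) * x ^ i)"

lemma geom_poly_shift_0: "geom_poly_shift l 0 x = geom_poly l x"
  by (simp add: geom_poly_shift_def geom_poly_def atLeast0AtMost)

lemma geom_poly_shift_recurrence:
  "geom_poly_shift (Suc l) k x + real (Suc k) * geom_poly_shift l k x
    = (1 + x) * geom_poly_shift l (Suc k) x"
proof -
  have "geom_poly_shift (Suc l) k x
      = (\<Sum>i\<le>l. real (Stirling l i) * (real i * (fact (i + k) * x ^ i) + fact (Suc i + k) * x ^ Suc i))"
    unfolding geom_poly_shift_def
    using sum_Stirling_Suc[of l "\<lambda>i. fact (i + k) * x ^ i"] by (simp add: mult.assoc)
  then show ?thesis
    unfolding geom_poly_shift_def
    by (simp add: sum_distrib_left sum.distrib[symmetric] algebra_simps)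
qed

lemma stirling_sum_geom_poly:
  "(\<Sum>j\<le>k. real (stirling (Suc k) (Suc j)) * geom_poly (l + j) x)
    = (1 + x) ^ k * geom_poly_shift l k x"
proof (induction k arbitrary: l)
  case 0
  show ?case by (simp add: geom_poly_shift_0)
next
  case (Suc k)
  have "(\<Sum>j\<le>Suc k. real (stirling (Suc (Suc k)) (Suc j)) * geom_poly (l + j) x)
      = real (Suc k) * (\<Sum>j\<le>Suc k. real (stirling (Suc k) (Suc j)) * geom_poly (l + j) x)
        + (\<Sum>j\<le>Suc k. real (stirling (Suc k) j) * geom_poly (l + j) x)"
    by (simp add: sum.distrib sum_distrib_left algebra_simps)
  also have "(\<Sum>j\<le>Suc k. real (stirling (Suc k) (Suc j)) * geom_poly (l + j) x)
      = (\<Sum>j\<le>k. real (stirling (Suc k) (Suc j)) * geom_poly (l + j) x)"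
    by simp
  also have "(\<Sum>j\<le>Suc k. real (stirling (Suc k) j) * geom_poly (l + j) x)
      = (\<Sum>j\<le>k. real (stirling (Suc k) (Suc j)) * geom_poly (Suc l + j) x)"
    by (simp only: sum.atMost_Suc_shift) simp
  also have "real (Suc k) * (\<Sum>j\<le>k. real (stirling (Suc k) (Suc j)) * geom_poly (l + j) x)
      + (\<Sum>j\<le>k. real (stirling (Suc k) (Suc j)) * geom_poly (Suc l + j) x)
      = (1 + x) ^ k * (geom_poly_shift (Suc l) k x + real (Suc k) * geom_poly_shift l k x)"
    by (simp only: Suc.IH) (simp add: algebra_simps)
  also have "\<dots> = (1 + x) ^ Suc k * geom_poly_shift l (Suc k) x"
    by (simp only: geom_poly_shift_recurrence power_Suc mult_ac)
  finally show ?case .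
qed

lemma binomial_Stirling_sum_geom_poly_shift:
  "(\<Sum>l\<le>n. real (n choose l) * real (Stirling (n - l) k) * x ^ k * geom_poly_shift l k x)
    = (\<Sum>m\<le>n. real (m choose k) * real (Stirling n m) * fact m * x ^ m)"
proof -
  define g where "g m = real (m choose k) * real (Stirling n m) * fact m * x ^ m" for m
  have "(\<Sum>l\<le>n. real (n choose l) * real (Stirling (n - l) k) * x ^ k * geom_poly_shift l k x)
      = (\<Sum>l\<le>n. \<Sum>i\<le>n. real (n choose l) * real (Stirling (n - l) k) * real (Stirling l i)
          * (fact (i + k) * x ^ (i + k)))"
  proof (rule sum.cong)
    fix l assume "l \<in> {..n}"
    then have "geom_poly_shift l k x = (\<Sum>i\<le>n. real (Stirling l i) * fact (i + k) * x ^ i)"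
      unfolding geom_poly_shift_def by (intro sum.mono_neutral_left) auto
    then show "real (n choose l) * real (Stirling (n - l) k) * x ^ k * geom_poly_shift l k x
        = (\<Sum>i\<le>n. real (n choose l) * real (Stirling (n - l) k) * real (Stirling l i)
          * (fact (i + k) * x ^ (i + k)))"
      by (simp add: sum_distrib_left power_add algebra_simps)
  qed simp
  also have "\<dots> = (\<Sum>i\<le>n. fact (i + k) * x ^ (i + k)
      * (\<Sum>l\<le>n. real (n choose l) * real (Stirling (n - l) k) * real (Stirling l i)))"
    by (subst sum.swap) (simp add: sum_distrib_left mult_ac)
  also have "\<dots> = (\<Sum>i\<le>n. g (i + k))"
    unfolding g_def of_nat_mult[symmetric] of_nat_sum[symmetric] Stirling_binomial_convolution
    by (simp add: mult_ac)
  also have "\<dots> = (\<Sum>m=k..n+k. g m)"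
    using sum.shift_bounds_cl_nat_ivl[of g 0 k n] by (simp add: atMost_atLeast0)
  also have "\<dots> = (\<Sum>m=k..n. g m)"
    by (rule sum.mono_neutral_right) (auto simp: g_def)
  also have "\<dots> = (\<Sum>m\<le>n. g m)"
    by (rule sum.mono_neutral_left) (auto simp: g_def)
  finally show ?thesis
    by (simp add: g_def)
qed

theorem theorem1:
  fixes n :: nat and x :: real
  assumes "n \<ge> 1" and "x \<noteq> -1"
  shows "harm_geom_poly n x =
    (\<Sum>l=0..n. \<Sum>k=1..n. \<Sum>j=0..k.
       (-1) ^ (k + 1) / real k * real (n choose l) * real (Stirling (n - l) k)
       * real (stirling (k + 1) (j + 1)) * geom_poly (l + j) x * (x / (1 + x)) ^ k)"
proof -
  define c :: "nat \<Rightarrow> real" where "c k = (-1) ^ (k + 1) / real k" for k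
  have "1 + x \<noteq> 0"
    using assms(2) by auto
  have "harm_geom_poly n x = (\<Sum>m\<le>n. real (Stirling n m) * fact m * harm m * x ^ m)"
    unfolding harm_geom_poly_def by (rule sum.mono_neutral_left) (auto simp: harm_def)
  also have "\<dots> = (\<Sum>m\<le>n. real (Stirling n m) * fact m * (\<Sum>k=1..n. c k * real (m choose k)) * x ^ m)"
    by (simp add: c_def harm_eq_alternating_binomial_sum_upto)
  also have "\<dots> = (\<Sum>k=1..n. c k * (\<Sum>m\<le>n. real (m choose k) * real (Stirling n m) * fact m * x ^ m))"
    unfolding sum_distrib_left sum_distrib_right by (subst sum.swap) (simp add: mult_ac)
  also have "\<dots> = (\<Sum>l\<le>n. \<Sum>k=1..n.
      c k * (real (n choose l) * real (Stirling (n - l) k) * x ^ k * geom_poly_shift l k x))"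
    by (subst sum.swap) (simp only: sum_distrib_left[symmetric] binomial_Stirling_sum_geom_poly_shift)
  also have "\<dots> = (\<Sum>l\<le>n. \<Sum>k=1..n. c k * (real (n choose l) * real (Stirling (n - l) k)
      * (x / (1 + x)) ^ k * (\<Sum>j\<le>k. real (stirling (Suc k) (Suc j)) * geom_poly (l + j) x)))"
    using \<open>1 + x \<noteq> 0\<close> by (simp add: stirling_sum_geom_poly power_divide mult.assoc del: stirling.simps)
  finally show ?thesis
    by (simp add: c_def sum_distrib_left atLeast0AtMost algebra_simps del: stirling.simps)
qed

end
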